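(* Let $\Gamma$ be a finite simple graph and let $\omega\ge 2$ be an integer. If $\Gamma$ is $\omega$-clique regular, then $\omega=2$ or $\omega=\omega(\Gamma)$.
   Context: A clique of order $\omega$ ($\omega$-clique) is a set of $\omega$ pairwise adjacent vertices. A graph $\Gamma$ is $\omega$-clique regular if it has a nonempty edge set and every edge of $\Gamma$ is contained in exactly one clique of order $\omega$. $\omega(\Gamma)$ denotes the clique number of $\Gamma$, the maximum order of a clique in $\Gamma$. *)

theory Defs
  imports Main
begin

definition finite_simple_graph :: "'a set \<Rightarrow> ('a \<Rightarrow> 'a \<Rightarrow> bool) \<Rightarrow> bool" where
  "finite_simple_graph V E \<longleftrightarrow> finite V \<and>
     (\<forall>x y. E x y \<longrightarrow> x \<in> V \<and> y \<in> V) \<and>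
     (\<forall>x y. E x y \<longrightarrow> E y x) \<and> (\<forall>x. \<not> E x x)"

definition is_clique :: "'a set \<Rightarrow> ('a \<Rightarrow> 'a \<Rightarrow> bool) \<Rightarrow> 'a set \<Rightarrow> bool" where
  "is_clique V E C \<longleftrightarrow> C \<subseteq> V \<and> (\<forall>x\<in>C. \<forall>y\<in>C. x \<noteq> y \<longrightarrow> E x y)"

definition is_w_clique :: "'a set \<Rightarrow> ('a \<Rightarrow> 'a \<Rightarrow> bool) \<Rightarrow> nat \<Rightarrow> 'a set \<Rightarrow> bool" where
  "is_w_clique V E w C \<longleftrightarrow> is_clique V E C \<and> finite C \<and> card C = w"

definition clique_regular :: "'a set \<Rightarrow> ('a \<Rightarrow> 'a \<Rightarrow> bool) \<Rightarrow> nat \<Rightarrow> bool" where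
  "clique_regular V E w \<longleftrightarrow> (\<exists>x y. E x y) \<and>
     (\<forall>x y. E x y \<longrightarrow> (\<exists>!C. is_w_clique V E w C \<and> x \<in> C \<and> y \<in> C))"

definition clique_number :: "'a set \<Rightarrow> ('a \<Rightarrow> 'a \<Rightarrow> bool) \<Rightarrow> nat" where
  "clique_number V E = Max {card C | C. is_clique V E C \<and> finite C}"

end

theory Submission
  imports Defs
begin

text \<open>A clique with \<open>w + 1 \<ge> 4\<close> vertices contains two distinct \<open>w\<close>-cliques, obtained by
  deleting one of two different vertices, and these still share the \<open>w - 1 \<ge> 2\<close> remaining
  vertices, hence an edge. So in a \<open>w\<close>-clique regular graph with \<open>w \<ge> 3\<close> no clique exceeds
  order \<open>w\<close>, while \<open>w\<close>-cliques exist because there is an edge.\<close>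

lemma is_clique_subset: "is_clique V E C \<Longrightarrow> A \<subseteq> C \<Longrightarrow> is_clique V E A"
  unfolding is_clique_def by blast

lemma obtain_two_distinct:
  assumes "2 \<le> card A"
  obtains a b where "a \<in> A" "b \<in> A" "a \<noteq> b"
proof -
  have "finite A" using assms card.infinite by force
  then show thesis using that assms card_le_Suc0_iff_eq[of A] by fastforce
qed

lemma finite_clique_card_le:
  assumes "finite_simple_graph V E" and "is_clique V E C"
  shows "finite C" and "card C \<le> card V"
proof -
  have "finite V" and "C \<subseteq> V"
    using assms unfolding finite_simple_graph_def is_clique_def by auto
  then show "finite C" and "card C \<le> card V"
    by (simp_all add: finite_subset card_mono)
qed

lemma clique_Suc_card_two_w_cliques_share_edge:
  assumes K: "is_clique V E K" "finite K" "card K = Suc w" and "3 \<le> w"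
  obtains D1 D2 a b where "is_w_clique V E w D1" "is_w_clique V E w D2" "D1 \<noteq> D2"
    "a \<in> D1 \<inter> D2" "b \<in> D1 \<inter> D2" "E a b"
proof -
  have "2 \<le> card K" using K(3) \<open>3 \<le> w\<close> by simp
  then obtain u v where uv: "u \<in> K" "v \<in> K" "u \<noteq> v"
    by (rule obtain_two_distinct)
  have "card (K - {u, v}) = w - 1"
    using K(2,3) uv by (simp add: card_Diff_subset)
  then have "2 \<le> card (K - {u, v})" using \<open>3 \<le> w\<close> by simp
  then obtain a b where ab: "a \<in> K - {u, v}" "b \<in> K - {u, v}" "a \<noteq> b"
    by (rule obtain_two_distinct)
  have w_clique: "is_w_clique V E w (K - {x})" if "x \<in> K" for x
    using that K is_clique_subset[OF K(1)] unfolding is_w_clique_def by auto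
  show thesis
  proof (rule that[OF w_clique[OF \<open>u \<in> K\<close>] w_clique[OF \<open>v \<in> K\<close>]])
    show "K - {u} \<noteq> K - {v}" using uv by blast
    show "a \<in> (K - {u}) \<inter> (K - {v})" and "b \<in> (K - {u}) \<inter> (K - {v})" using ab by auto
    show "E a b" using K(1) ab unfolding is_clique_def by blast
  qed
qed

lemma card_clique_le_if_clique_regular:
  assumes "clique_regular V E w" "3 \<le> w" "is_clique V E C" "finite C"
  shows "card C \<le> w"
proof (rule ccontr)
  assume "\<not> card C \<le> w"
  then obtain K where "K \<subseteq> C" "card K = Suc w"
    using obtain_subset_with_card_n[of "Suc w" C] by force
  have "finite K" using \<open>K \<subseteq> C\<close> \<open>finite C\<close> finite_subset by blast
  have "is_clique V E K" using is_clique_subset assms(3) \<open>K \<subseteq> C\<close> by blast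
  obtain D1 D2 a b where D: "is_w_clique V E w D1" "is_w_clique V E w D2" "D1 \<noteq> D2"
    and ab: "a \<in> D1 \<inter> D2" "b \<in> D1 \<inter> D2" "E a b"
    by (rule clique_Suc_card_two_w_cliques_share_edge
        [OF \<open>is_clique V E K\<close> \<open>finite K\<close> \<open>card K = Suc w\<close> assms(2)])
  have "\<exists>!D. is_w_clique V E w D \<and> a \<in> D \<and> b \<in> D"
    using assms(1) \<open>E a b\<close> unfolding clique_regular_def by blast
  then have "D1 = D2" using D(1,2) ab(1,2) by (elim ex1E) blast
  with \<open>D1 \<noteq> D2\<close> show False ..
qed

lemma clique_number_eqI:
  assumes "finite_simple_graph V E" "is_w_clique V E w D"
    and "\<And>C. is_clique V E C \<Longrightarrow> card C \<le> w"
  shows "clique_number V E = w"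
  unfolding clique_number_def
proof (rule Max_eqI)
  have "{card C | C. is_clique V E C \<and> finite C} \<subseteq> {..card V}"
    using finite_clique_card_le[OF assms(1)] by auto
  then show "finite {card C | C. is_clique V E C \<and> finite C}"
    by (rule finite_subset) simp
  show "w \<in> {card C | C. is_clique V E C \<and> finite C}"
    using assms(2) unfolding is_w_clique_def by blast
qed (use assms(3) in blast)

theorem theorem1:
  fixes V :: "'a set" and E :: "'a \<Rightarrow> 'a \<Rightarrow> bool" and w :: nat
  assumes "finite_simple_graph V E"
    and "w \<ge> 2"
    and "clique_regular V E w"
  shows "w = 2 \<or> w = clique_number V E"
proof (cases "w = 2")
  case False
  with assms(2) have "3 \<le> w" by simp
  obtain x y where "E x y" using assms(3) unfolding clique_regular_def by blast
  then obtain D where "is_w_clique V E w D"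
    using assms(3) unfolding clique_regular_def by blast
  moreover have "card C \<le> w" if "is_clique V E C" for C
    using card_clique_le_if_clique_regular[OF assms(3) \<open>3 \<le> w\<close> that]
      finite_clique_card_le(1)[OF assms(1) that] by blast
  ultimately show ?thesis using clique_number_eqI[OF assms(1)] by auto
qed simp

end
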